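(* Let $G$ be a finitely generated group, and let $M$ be a sequence of probability measures on $G$ that measures index uniformly. Then the $\limsup$ in the definition of $\textup{dc}_M(G)$ is actually a limit, and $\textup{dc}_{M'}(G)=\textup{dc}_M(G)$ for every other sequence $M'$ of probability measures on $G$ that measures index uniformly. Moreover, if $G$ is amenable then $\textup{dc}_\mu(G)=\textup{dc}_M(G)$ for every finitely additive left-invariant mean $\mu$ on $G$.
   Context: A sequence $M=(\mu_n)$ of probability measures measures index uniformly if $\mu_n(xH)\to1/[G:H]$ uniformly over $x\in G$ and subgroups $H$ (with $1/[G:H]=0$ for infinite index). $\textup{dc}_M(G)=\limsup_n(\mu_n\times\mu_n)(\{(x,y):xy=yx\})$. For a finitely additive left-invariant mean $\mu$ (positive normalised left-invariant linear functional on $\ell^\infty(G)$, $\mu(X)=\int1_X\,d\mu$), $\textup{dc}_\mu(G)=\int_x\int_y1_{\{xy=yx\}}\,d\mu(x)\,d\mu(y)$. *)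

theory Defs
  imports "HOL-Algebra.Algebra" "HOL-Probability.Probability"
begin

definition fin_gen :: "('a, 'b) monoid_scheme \<Rightarrow> bool" where
  "fin_gen G \<longleftrightarrow> (\<exists>S. finite S \<and> S \<subseteq> carrier G \<and> generate G S = carrier G)"

definition left_cosets :: "('a, 'b) monoid_scheme \<Rightarrow> 'a set \<Rightarrow> 'a set set" where
  "left_cosets G H = (\<lambda>x. x <#\<^bsub>G\<^esub> H) ` carrier G"

definition inv_index :: "('a, 'b) monoid_scheme \<Rightarrow> 'a set \<Rightarrow> real" where
  "inv_index G H = (if finite (left_cosets G H) then 1 / real (card (left_cosets G H)) else 0)"

definition prob_on :: "('a, 'b) monoid_scheme \<Rightarrow> 'a pmf \<Rightarrow> bool" where
  "prob_on G p \<longleftrightarrow> set_pmf p \<subseteq> carrier G"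

definition measures_index_uniformly :: "('a, 'b) monoid_scheme \<Rightarrow> (nat \<Rightarrow> 'a pmf) \<Rightarrow> bool" where
  "measures_index_uniformly G M \<longleftrightarrow>
     (\<forall>e>0. \<exists>N. \<forall>n\<ge>N. \<forall>x\<in>carrier G. \<forall>H. subgroup H G \<longrightarrow>
        \<bar>measure_pmf.prob (M n) (x <#\<^bsub>G\<^esub> H) - inv_index G H\<bar> < e)"

definition comm_prob :: "('a, 'b) monoid_scheme \<Rightarrow> 'a pmf \<Rightarrow> real" where
  "comm_prob G p = measure_pmf.prob (pair_pmf p p)
     {(x, y). x \<in> carrier G \<and> y \<in> carrier G \<and> x \<otimes>\<^bsub>G\<^esub> y = y \<otimes>\<^bsub>G\<^esub> x}"

definition dc_seq :: "('a, 'b) monoid_scheme \<Rightarrow> (nat \<Rightarrow> 'a pmf) \<Rightarrow> ereal" where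
  "dc_seq G M = limsup (\<lambda>n. ereal (comm_prob G (M n)))"

definition bdd_on :: "('a, 'b) monoid_scheme \<Rightarrow> ('a \<Rightarrow> real) \<Rightarrow> bool" where
  "bdd_on G f \<longleftrightarrow> (\<exists>B. \<forall>x\<in>carrier G. \<bar>f x\<bar> \<le> B)"

(* finitely additive left-invariant mean: positive normalised left-invariant linear
   functional on l^infty(G); functions are considered only via their values on carrier G *)
definition left_inv_mean :: "('a, 'b) monoid_scheme \<Rightarrow> (('a \<Rightarrow> real) \<Rightarrow> real) \<Rightarrow> bool" where
  "left_inv_mean G m \<longleftrightarrow>
     (\<forall>f g. bdd_on G f \<longrightarrow> bdd_on G g \<longrightarrow> m (\<lambda>x. f x + g x) = m f + m g) \<and>
     (\<forall>f c. bdd_on G f \<longrightarrow> m (\<lambda>x. c * f x) = c * m f) \<and>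
     (\<forall>f. bdd_on G f \<longrightarrow> (\<forall>x\<in>carrier G. f x \<ge> 0) \<longrightarrow> m f \<ge> 0) \<and>
     m (\<lambda>x. 1) = 1 \<and>
     (\<forall>f. \<forall>g\<in>carrier G. bdd_on G f \<longrightarrow> m (\<lambda>x. f (g \<otimes>\<^bsub>G\<^esub> x)) = m f)"

definition amenable :: "('a, 'b) monoid_scheme \<Rightarrow> bool" where
  "amenable G \<longleftrightarrow> (\<exists>m. left_inv_mean G m)"

definition dc_mean :: "('a, 'b) monoid_scheme \<Rightarrow> (('a \<Rightarrow> real) \<Rightarrow> real) \<Rightarrow> real" where
  "dc_mean G m = m (\<lambda>y. m (\<lambda>x. if x \<otimes>\<^bsub>G\<^esub> y = y \<otimes>\<^bsub>G\<^esub> x then 1 else 0))"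

end

theory Submission
  imports Defs
begin

text \<open>Write \<open>C(x)\<close> for the centralizer of \<open>x\<close> and \<open>f(x) = 1/[G:C(x)]\<close>. The probability that
  a \<open>p\<close>-random and a \<open>q\<close>-random element commute is \<open>\<integral> q(C(x)) dp(x)\<close>, which is symmetric in
  \<open>p\<close> and \<open>q\<close>. If \<open>p\<close> and \<open>q\<close> both give every centralizer \<open>C(x)\<close> measure within \<open>e\<close> of \<open>f(x)\<close>,
  then the commuting probabilities for \<open>(p,p)\<close> and \<open>(p,q)\<close> are within \<open>e\<close> of \<open>\<integral> f dp\<close>, those
  for \<open>(q,p)\<close> and \<open>(q,q)\<close> within \<open>e\<close> of \<open>\<integral> f dq\<close>, so by symmetry the two diagonal ones differ by at
  most \<open>4e\<close>. Hence the sequence is Cauchy and its limit does not depend on the sequence of measures.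

  A left-invariant mean gives all cosets of a subgroup \<open>H\<close> the same mass, hence gives \<open>H\<close> the
  mass \<open>1/[G:H]\<close>, so \<open>dc\<^sub>\<mu>(G) = \<mu>(f)\<close>. Exchanging the mean with an integral against \<open>\<mu>\<^sub>n\<close> gives
  \<open>\<mu>(y \<mapsto> \<mu>\<^sub>n(C(y))) = \<integral> f d\<mu>\<^sub>n\<close>, and \<open>\<mu>\<^sub>n(C(y)) \<rightarrow> f(y)\<close> uniformly, so the limit is \<open>\<mu>(f)\<close>.\<close>

definition centralizer :: "('a, 'b) monoid_scheme \<Rightarrow> 'a \<Rightarrow> 'a set" where
  "centralizer G x = {y \<in> carrier G. x \<otimes>\<^bsub>G\<^esub> y = y \<otimes>\<^bsub>G\<^esub> x}"

definition inv_centralizer_index :: "('a, 'b) monoid_scheme \<Rightarrow> 'a \<Rightarrow> real" where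
  "inv_centralizer_index G x = inv_index G (centralizer G x)"

definition comm_prob_pair :: "('a, 'b) monoid_scheme \<Rightarrow> 'a pmf \<Rightarrow> 'a pmf \<Rightarrow> real" where
  "comm_prob_pair G p q = measure_pmf.prob (pair_pmf p q)
     {(x, y). x \<in> carrier G \<and> y \<in> carrier G \<and> x \<otimes>\<^bsub>G\<^esub> y = y \<otimes>\<^bsub>G\<^esub> x}"

lemma comm_prob_eq_comm_prob_pair: "comm_prob G p = comm_prob_pair G p p"
  by (simp add: comm_prob_def comm_prob_pair_def)

lemma (in group) subgroup_centralizer:
  assumes x: "x \<in> carrier G"
  shows "subgroup (centralizer G x) G"
proof (rule subgroupI)
  fix a assume "a \<in> centralizer G x"
  then have a: "a \<in> carrier G" and xa: "x \<otimes> a = a \<otimes> x" by (auto simp: centralizer_def)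
  have "x \<otimes> inv a = inv a \<otimes> (a \<otimes> x) \<otimes> inv a" using a x by (simp add: m_assoc[symmetric])
  also have "\<dots> = inv a \<otimes> x" using a x by (simp add: xa[symmetric] m_assoc)
  finally show "inv a \<in> centralizer G x" using a by (simp add: centralizer_def)
next
  fix a b assume "a \<in> centralizer G x" "b \<in> centralizer G x"
  then show "a \<otimes> b \<in> centralizer G x" using x
    by (auto simp: centralizer_def) (metis m_assoc)
qed (use x in \<open>auto simp: centralizer_def\<close>)

lemma inv_index_nonneg: "0 \<le> inv_index G H"
  by (simp add: inv_index_def)

lemma inv_index_le_1: "inv_index G H \<le> 1"
  by (auto simp: inv_index_def divide_le_eq)

lemma abs_inv_centralizer_index_le_1: "\<bar>inv_centralizer_index G x\<bar> \<le> 1"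
  using inv_index_nonneg[of G "centralizer G x"] inv_index_le_1[of G "centralizer G x"]
  unfolding inv_centralizer_index_def by linarith

lemma measures_index_uniformly_centralizer:
  assumes "group G" and "measures_index_uniformly G M" and "e > 0"
  shows "eventually (\<lambda>n. \<forall>x\<in>carrier G.
     \<bar>measure_pmf.prob (M n) (centralizer G x) - inv_centralizer_index G x\<bar> < e) sequentially"
proof -
  interpret group G by fact
  obtain N where N: "\<forall>n\<ge>N. \<forall>x\<in>carrier G. \<forall>H. subgroup H G \<longrightarrow>
      \<bar>measure_pmf.prob (M n) (x <#\<^bsub>G\<^esub> H) - inv_index G H\<bar> < e"
    using assms(2,3) unfolding measures_index_uniformly_def by blast
  have "\<one>\<^bsub>G\<^esub> <#\<^bsub>G\<^esub> centralizer G x = centralizer G x" for x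
    by (rule lcos_mult_one) (auto simp: centralizer_def)
  then show ?thesis
    unfolding eventually_sequentially inv_centralizer_index_def
    using N subgroup_centralizer by (metis one_closed)
qed

lemma left_cosets_eq_lcosets: "left_cosets G H = lcosets\<^bsub>G\<^esub> H"
  by (auto simp: left_cosets_def LCOSETS_def)

lemma measure_pair_pmf:
  "measure_pmf.prob (pair_pmf p q) A = (\<integral>x. measure_pmf.prob q {y. (x, y) \<in> A} \<partial>p)"
proof -
  have pair: "pair_pmf p q = bind_pmf p (\<lambda>x. map_pmf (Pair x) q)"
    by (simp add: pair_pmf_def map_pmf_def)
  have "measure_pmf.prob (pair_pmf p q) A = (\<integral>x. measure_pmf.prob (map_pmf (Pair x) q) A \<partial>p)"
    unfolding pair measure_pmf_bind
    by (rule measure_pmf.measure_bind) (auto simp: space_subprob_algebra measure_pmf.subprob_space_axioms)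
  then show ?thesis by (simp add: vimage_def)
qed

lemma eq_if_abs_diff_le_epsilon:
  fixes a b C :: real
  assumes "\<And>e. e > 0 \<Longrightarrow> \<bar>a - b\<bar> \<le> C * e"
  shows "a = b"
proof (rule ccontr)
  assume "a \<noteq> b"
  define e where "e = \<bar>a - b\<bar> / (\<bar>C\<bar> + 1)"
  have "e > 0" using \<open>a \<noteq> b\<close> by (simp add: e_def add_pos_nonneg)
  then have "\<bar>a - b\<bar> \<le> \<bar>C\<bar> * e" using assms[of e] abs_ge_self[of C] by (smt (verit) mult_right_mono)
  also have "\<dots> < (\<bar>C\<bar> + 1) * e" using \<open>e > 0\<close> by simp
  also have "\<dots> = \<bar>a - b\<bar>" by (simp add: e_def add_pos_nonneg)
  finally show False by simp
qed

lemma pmf_finite_approx: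
  assumes "e > 0"
  shows "\<exists>S. finite S \<and> measure_pmf.prob p (- S) \<le> e"
proof -
  have "pmf p summable_on UNIV"
    using abs_summable_summable abs_summable_equivalent pmf_abs_summable by blast
  moreover have "infsum (pmf p) UNIV = 1"
    by (metis infsetsum_infsum infsetsum_pmf_eq_1 pmf_abs_summable subset_UNIV)
  ultimately have "(pmf p has_sum 1) UNIV"
    by (metis has_sum_infsum)
  then obtain S where "finite S" "dist (sum (pmf p) S) 1 \<le> e"
    using has_sum_finite_approximation[OF _ assms] by blast
  moreover have "measure_pmf.prob p (- S) = 1 - sum (pmf p) S"
    using \<open>finite S\<close> measure_pmf.prob_compl[of S p]
    by (simp add: measure_measure_pmf_finite Compl_eq_Diff_UNIV)
  ultimately show ?thesis by (auto simp: dist_real_def)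
qed

lemma abs_integral_pmf_minus_sum_le:
  fixes k :: "'a \<Rightarrow> real" and p :: "'a pmf"
  assumes "finite S" and "\<And>x. \<bar>k x\<bar> \<le> B"
  shows "\<bar>(\<integral>x. k x \<partial>p) - (\<Sum>x\<in>S. pmf p x * k x)\<bar> \<le> B * measure_pmf.prob p (- S)"
proof -
  have "0 \<le> B" using assms(2) abs_ge_zero order_trans by blast
  have int: "integrable p (\<lambda>x. k x * indicator A x)" for A
    using assms(2) \<open>0 \<le> B\<close> by (intro measure_pmf.integrable_const_bound[where B=B])
      (auto simp: indicator_def)
  have "(\<integral>x. k x \<partial>p) = (\<integral>x. k x * indicator S x + k x * indicator (- S) x \<partial>p)"
    by (rule Bochner_Integration.integral_cong) (auto simp: indicator_def)
  also have "\<dots> = (\<integral>x. k x * indicator S x \<partial>p) + (\<integral>x. k x * indicator (- S) x \<partial>p)"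
    by (rule Bochner_Integration.integral_add[OF int int])
  finally have "(\<integral>x. k x \<partial>p) = (\<integral>x. k x * indicator S x \<partial>p) + (\<integral>x. k x * indicator (- S) x \<partial>p)" .
  moreover have "(\<integral>x. k x * indicator S x \<partial>p) = (\<Sum>x\<in>S. pmf p x * k x)"
    using assms(1) by (subst integral_measure_pmf_real[where A=S]) (auto simp: indicator_def mult.commute)
  moreover have "\<bar>\<integral>x. k x * indicator (- S) x \<partial>p\<bar> \<le> B * measure_pmf.prob p (- S)"
  proof -
    have "\<bar>\<integral>x. k x * indicator (- S) x \<partial>p\<bar> \<le> (\<integral>x. \<bar>k x * indicator (- S) x\<bar> \<partial>p)"
      by (rule integral_abs_bound)
    also have "\<dots> \<le> (\<integral>x. B * indicator (- S) x \<partial>p)"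
    proof (rule integral_mono)
      show "integrable p (\<lambda>x. B * indicator (- S) x)"
        using \<open>0 \<le> B\<close> by (intro measure_pmf.integrable_const_bound[where B=B]) (auto simp: indicator_def)
      show "integrable p (\<lambda>x. \<bar>k x * indicator (- S) x\<bar>)"
        using int by (rule integrable_abs)
    qed (use assms(2) in \<open>auto simp: indicator_def\<close>)
    finally show ?thesis by simp
  qed
  ultimately show ?thesis by simp
qed

lemma comm_prob_pair_eq_integral:
  "comm_prob_pair G p q =
     (\<integral>x. (if x \<in> carrier G then measure_pmf.prob q (centralizer G x) else 0) \<partial>p)"
  unfolding comm_prob_pair_def measure_pair_pmf
  by (rule Bochner_Integration.integral_cong) (auto simp: centralizer_def)

lemma comm_prob_pair_commute: "comm_prob_pair G p q = comm_prob_pair G q p"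
proof -
  let ?C = "{(x, y). x \<in> carrier G \<and> y \<in> carrier G \<and> x \<otimes>\<^bsub>G\<^esub> y = y \<otimes>\<^bsub>G\<^esub> x}"
  have "(\<lambda>(x, y). (y, x)) -` ?C = ?C" by auto
  then show ?thesis
    unfolding comm_prob_pair_def by (subst pair_commute_pmf) (simp only: measure_map_pmf)
qed

lemma comm_prob_pair_approx:
  assumes "prob_on G p"
    and "\<forall>x\<in>carrier G. \<bar>measure_pmf.prob q (centralizer G x) - f x\<bar> \<le> e"
    and "\<And>x. \<bar>f x\<bar> \<le> 1"
  shows "\<bar>comm_prob_pair G p q - (\<integral>x. f x \<partial>p)\<bar> \<le> e"
proof -
  define g where "g x = (if x \<in> carrier G then measure_pmf.prob q (centralizer G x) else 0)" for x
  have "integrable p g" "integrable p f"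
    using assms(3) by (auto simp: g_def intro!: measure_pmf.integrable_const_bound[where B=1])
  then have "\<bar>comm_prob_pair G p q - (\<integral>x. f x \<partial>p)\<bar> = \<bar>\<integral>x. g x - f x \<partial>p\<bar>"
    by (simp add: comm_prob_pair_eq_integral g_def[abs_def])
  also have "\<dots> \<le> (\<integral>x. \<bar>g x - f x\<bar> \<partial>p)"
    by (rule integral_abs_bound)
  also have "\<dots> \<le> (\<integral>x. e \<partial>p)"
    using assms(1,2) \<open>integrable p g\<close> \<open>integrable p f\<close> unfolding prob_on_def
    by (intro integral_mono_AE AE_pmfI integrable_abs Bochner_Integration.integrable_diff)
      (auto simp: g_def[abs_def])
  finally show ?thesis by simp
qed

lemma comm_prob_close:
  assumes "prob_on G p" and "prob_on G q"
    and "\<forall>x\<in>carrier G. \<bar>measure_pmf.prob p (centralizer G x) - inv_centralizer_index G x\<bar> \<le> e"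
    and "\<forall>x\<in>carrier G. \<bar>measure_pmf.prob q (centralizer G x) - inv_centralizer_index G x\<bar> \<le> e"
  shows "\<bar>comm_prob G p - comm_prob G q\<bar> \<le> 4 * e"
proof -
  let ?I = "\<lambda>r. \<integral>x. inv_centralizer_index G x \<partial>r"
  have "\<bar>comm_prob_pair G p p - ?I p\<bar> \<le> e" "\<bar>comm_prob_pair G p q - ?I p\<bar> \<le> e"
       "\<bar>comm_prob_pair G q p - ?I q\<bar> \<le> e" "\<bar>comm_prob_pair G q q - ?I q\<bar> \<le> e"
    using assms by (auto intro!: comm_prob_pair_approx simp: abs_inv_centralizer_index_le_1)
  then show ?thesis
    using comm_prob_pair_commute[of G p q]
    unfolding comm_prob_eq_comm_prob_pair abs_le_iff by linarith
qed

lemma comm_prob_uniformly_close: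
  assumes "group G" and "\<forall>n. prob_on G (M n)" and "\<forall>n. prob_on G (M' n)"
    and "measures_index_uniformly G M" and "measures_index_uniformly G M'"
    and "e > 0"
  shows "\<exists>N. \<forall>n\<ge>N. \<forall>k\<ge>N. \<bar>comm_prob G (M n) - comm_prob G (M' k)\<bar> < e"
proof -
  have "eventually (\<lambda>n. (\<forall>x\<in>carrier G.
          \<bar>measure_pmf.prob (M n) (centralizer G x) - inv_centralizer_index G x\<bar> < e / 5) \<and>
        (\<forall>x\<in>carrier G.
          \<bar>measure_pmf.prob (M' n) (centralizer G x) - inv_centralizer_index G x\<bar> < e / 5))
        sequentially"
    using assms by (intro eventually_conj measures_index_uniformly_centralizer) auto
  then obtain N where N: "\<And>n. n \<ge> N \<Longrightarrow> \<forall>x\<in>carrier G.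
      \<bar>measure_pmf.prob (M n) (centralizer G x) - inv_centralizer_index G x\<bar> \<le> e / 5 \<and>
      \<bar>measure_pmf.prob (M' n) (centralizer G x) - inv_centralizer_index G x\<bar> \<le> e / 5"
    unfolding eventually_sequentially by (meson less_imp_le)
  have "\<bar>comm_prob G (M n) - comm_prob G (M' k)\<bar> \<le> 4 * (e / 5)" if "n \<ge> N" "k \<ge> N" for n k
    using assms(2,3) N[OF \<open>n \<ge> N\<close>] N[OF \<open>k \<ge> N\<close>] by (intro comm_prob_close) auto
  then show ?thesis
    using \<open>e > 0\<close> by (intro exI[of _ N]) force
qed

lemma comm_prob_convergent:
  assumes "group G" and "\<forall>n. prob_on G (M n)" and "measures_index_uniformly G M"
  shows "convergent (\<lambda>n. comm_prob G (M n))"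
proof -
  have "Cauchy (\<lambda>n. comm_prob G (M n))"
    using comm_prob_uniformly_close[OF assms(1,2,2,3,3)] by (intro CauchyI) auto
  then show ?thesis by (simp add: Cauchy_convergent_iff)
qed

lemma dc_seq_eq_lim:
  assumes "convergent (\<lambda>n. comm_prob G (M n))"
  shows "dc_seq G M = ereal (lim (\<lambda>n. comm_prob G (M n)))"
  unfolding dc_seq_def
  using assms by (intro lim_imp_Limsup) (simp_all add: convergent_LIMSEQ_iff)

lemma lim_comm_prob_unique:
  assumes "group G" and "\<forall>n. prob_on G (M n)" and "\<forall>n. prob_on G (M' n)"
    and "measures_index_uniformly G M" and "measures_index_uniformly G M'"
  shows "lim (\<lambda>n. comm_prob G (M' n)) = lim (\<lambda>n. comm_prob G (M n))"
proof -
  have "(\<lambda>n. comm_prob G (M n)) \<longlonglongrightarrow> lim (\<lambda>n. comm_prob G (M n))"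
    using comm_prob_convergent[OF assms(1,2,4)] by (simp add: convergent_LIMSEQ_iff)
  moreover have "(\<lambda>n. comm_prob G (M n) - comm_prob G (M' n)) \<longlonglongrightarrow> 0"
    using comm_prob_uniformly_close[OF assms] by (intro LIMSEQ_I) (simp, meson order_refl)
  ultimately have "(\<lambda>n. comm_prob G (M' n)) \<longlonglongrightarrow> lim (\<lambda>n. comm_prob G (M n))"
    by (rule Lim_transform2)
  then show ?thesis by (rule limI)
qed

lemma bdd_onI: "(\<And>x. x \<in> carrier G \<Longrightarrow> \<bar>f x\<bar> \<le> B) \<Longrightarrow> bdd_on G f"
  by (auto simp: bdd_on_def)

lemma bdd_on_add: "bdd_on G f \<Longrightarrow> bdd_on G g \<Longrightarrow> bdd_on G (\<lambda>x. f x + g x)"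
  unfolding bdd_on_def by (meson abs_triangle_ineq add_mono order_trans)

lemma bdd_on_mult: "bdd_on G f \<Longrightarrow> bdd_on G (\<lambda>x. c * f x)"
  unfolding bdd_on_def by (metis abs_ge_zero abs_mult mult_left_mono)

lemma bdd_on_sum: "(\<And>i. i \<in> I \<Longrightarrow> bdd_on G (f i)) \<Longrightarrow> bdd_on G (\<lambda>x. \<Sum>i\<in>I. f i x)"
proof (induction I rule: infinite_finite_induct)
  case (insert i I)
  then show ?case by (simp add: bdd_on_add)
qed (auto intro: bdd_onI[where B=0])

lemma bdd_on_indicator: "bdd_on G (indicator A :: _ \<Rightarrow> real)"
  by (rule bdd_onI[where B=1]) (simp add: indicator_def)

lemma bdd_on_integral_pmf:
  fixes p :: "'c pmf"
  assumes "\<And>x y. \<bar>h x y\<bar> \<le> B"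
  shows "bdd_on G (\<lambda>y. \<integral>x. h x y \<partial>p)"
proof (rule bdd_onI)
  fix y
  have "\<bar>\<integral>x. h x y \<partial>p\<bar> \<le> (\<integral>x. \<bar>h x y\<bar> \<partial>p)"
    by (rule integral_abs_bound)
  also have "\<dots> \<le> (\<integral>x. B \<partial>p)"
    using assms by (intro integral_mono measure_pmf.integrable_const_bound[where B=B])
      (auto intro: order_trans[OF abs_ge_zero])
  finally show "\<bar>\<integral>x. h x y \<partial>p\<bar> \<le> B" by simp
qed

lemma bdd_on_inv_centralizer_index: "bdd_on G (inv_centralizer_index G)"
  by (rule bdd_onI[OF abs_inv_centralizer_index_le_1])

context
  fixes G :: "('a, 'b) monoid_scheme" (structure) and m :: "('a \<Rightarrow> real) \<Rightarrow> real"
  assumes mean: "left_inv_mean G m"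
begin

lemma mean_add: "bdd_on G f \<Longrightarrow> bdd_on G g \<Longrightarrow> m (\<lambda>x. f x + g x) = m f + m g"
  using mean unfolding left_inv_mean_def by blast

lemma mean_mult: "bdd_on G f \<Longrightarrow> m (\<lambda>x. c * f x) = c * m f"
  using mean unfolding left_inv_mean_def by blast

lemma mean_nonneg: "bdd_on G f \<Longrightarrow> (\<And>x. x \<in> carrier G \<Longrightarrow> 0 \<le> f x) \<Longrightarrow> 0 \<le> m f"
  using mean unfolding left_inv_mean_def by blast

lemma mean_one: "m (\<lambda>x. 1) = 1"
  using mean unfolding left_inv_mean_def by blast

lemma mean_translate: "g \<in> carrier G \<Longrightarrow> bdd_on G f \<Longrightarrow> m (\<lambda>x. f (g \<otimes> x)) = m f"
  using mean unfolding left_inv_mean_def by blast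

lemma mean_const: "m (\<lambda>x. c) = c"
  using mean_mult[of "\<lambda>x. 1" c] mean_one by (simp add: bdd_onI[where B=1])

lemma mean_mono:
  assumes "bdd_on G f" and "bdd_on G g" and "\<And>x. x \<in> carrier G \<Longrightarrow> f x \<le> g x"
  shows "m f \<le> m g"
proof -
  have "bdd_on G (\<lambda>x. g x - f x)"
    using bdd_on_add[OF assms(2) bdd_on_mult[OF assms(1), of "-1"]] by simp
  then have "m g = m f + m (\<lambda>x. g x - f x)" and "0 \<le> m (\<lambda>x. g x - f x)"
    using mean_add[OF assms(1)] assms(3) by (force intro: mean_nonneg)+
  then show ?thesis by simp
qed

lemma mean_cong:
  "bdd_on G f \<Longrightarrow> bdd_on G g \<Longrightarrow> (\<And>x. x \<in> carrier G \<Longrightarrow> f x = g x) \<Longrightarrow> m f = m g"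
  by (metis mean_mono order_antisym order_refl)

lemma abs_mean_diff_le:
  assumes "bdd_on G f" and "bdd_on G g" and "\<And>x. x \<in> carrier G \<Longrightarrow> \<bar>f x - g x\<bar> \<le> e"
  shows "\<bar>m f - m g\<bar> \<le> e"
proof -
  have "bdd_on G (\<lambda>x. f x + e)" "bdd_on G (\<lambda>x. g x + e)"
    using assms(1,2) by (auto intro: bdd_on_add bdd_onI[where B="\<bar>e\<bar>"])
  moreover have "f x \<le> g x + e" "g x \<le> f x + e" if "x \<in> carrier G" for x
    using assms(3)[OF that] by (auto simp: abs_le_iff)
  ultimately have "m f \<le> m (\<lambda>x. g x + e)" "m g \<le> m (\<lambda>x. f x + e)"
    using assms(1,2) by (auto intro!: mean_mono)
  moreover have "m (\<lambda>x. g x + e) = m g + e" "m (\<lambda>x. f x + e) = m f + e"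
    using assms(1,2) mean_add mean_const by (auto simp: bdd_onI[where B="\<bar>e\<bar>"])
  ultimately show ?thesis by linarith
qed

lemma mean_sum: "(\<And>i. i \<in> I \<Longrightarrow> bdd_on G (f i)) \<Longrightarrow> m (\<lambda>x. \<Sum>i\<in>I. f i x) = (\<Sum>i\<in>I. m (f i))"
proof (induction I rule: infinite_finite_induct)
  case (insert i I)
  then show ?case by (simp add: mean_add bdd_on_sum)
qed (simp_all add: mean_const)

lemma mean_indicator_lcos:
  assumes "group G" and H: "subgroup H G" and g: "g \<in> carrier G"
  shows "m (indicator (g <# H)) = m (indicator H)"
proof -
  interpret group G by fact
  have "indicator H (inv g \<otimes> x) = (indicator (g <# H) x :: real)" if "x \<in> carrier G" for x
    using subgroup.lcos_module_rev[OF H is_group g that] subgroup.lcos_module_imp[OF H is_group g]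
    by (auto simp: indicator_def)
  then have "m (indicator (g <# H)) = m (\<lambda>x. indicator H (inv g \<otimes> x))"
    by (intro mean_cong bdd_on_indicator) (auto intro: bdd_onI[where B=1] simp: indicator_def)
  also have "\<dots> = m (indicator H)"
    using g by (intro mean_translate bdd_on_indicator) auto
  finally show ?thesis .
qed

lemma mean_indicator_Union_lcosets:
  assumes "group G" and H: "subgroup H G" and F: "F \<subseteq> left_cosets G H" "finite F"
  shows "m (indicator (\<Union>F)) = real (card F) * m (indicator H)"
proof -
  interpret group G by fact
  have "disjoint_family_on id F"
    using F(1) lcos_disjoint[OF H] unfolding left_cosets_eq_lcosets disjoint_family_on_def id_apply
    by blast
  then have "indicator (\<Union>F) = (\<lambda>x. \<Sum>c\<in>F. indicator c x :: real)"
    using indicator_UN_disjoint[OF F(2), of id] by fastforce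
  then have "m (indicator (\<Union>F)) = (\<Sum>c\<in>F. m (indicator c))"
    by (simp add: mean_sum bdd_on_indicator)
  also have "\<dots> = (\<Sum>c\<in>F. m (indicator H))"
    using F(1) by (intro sum.cong) (auto simp: left_cosets_def mean_indicator_lcos[OF is_group H])
  finally show ?thesis by simp
qed

lemma mean_indicator_subgroup:
  assumes "group G" and H: "subgroup H G"
  shows "m (indicator H) = inv_index G H"
proof (cases "finite (left_cosets G H)")
  case True
  have "\<Union>(left_cosets G H) = carrier G"
    using group.lcosets_part_G[OF assms] by (simp add: left_cosets_eq_lcosets)
  then have "m (indicator (\<Union>(left_cosets G H))) = 1"
    using mean_cong[of _ "\<lambda>x. 1"] mean_one by (simp add: bdd_on_indicator bdd_onI[where B=1])
  then show ?thesis
    using mean_indicator_Union_lcosets[OF assms order_refl True]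
    by (auto simp: inv_index_def True eq_divide_eq mult.commute)
next
  case False
  have "real n * m (indicator H) \<le> 1" for n
  proof -
    obtain F where F: "F \<subseteq> left_cosets G H" "finite F" "card F = n"
      using infinite_arbitrarily_large[OF False] by blast
    have "m (indicator (\<Union>F)) \<le> m (\<lambda>x. 1)"
      by (intro mean_mono bdd_on_indicator) (auto intro: bdd_onI[where B=1] simp: indicator_def)
    then show ?thesis
      using mean_indicator_Union_lcosets[OF assms F(1,2)] F(3) mean_one by simp
  qed
  moreover have "0 \<le> m (indicator H)"
    by (intro mean_nonneg bdd_on_indicator) simp
  ultimately have "m (indicator H) = 0"
    using reals_Archimedean3[of "m (indicator H)"] by (meson less_le not_le)
  then show ?thesis by (simp add: inv_index_def False)
qed

lemma mean_integral_pmf: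
  fixes p :: "'c pmf"
  assumes h: "\<And>x y. \<bar>h x y\<bar> \<le> B"
  shows "m (\<lambda>y. \<integral>x. h x y \<partial>p) = (\<integral>x. m (h x) \<partial>p)"
proof (rule eq_if_abs_diff_le_epsilon)
  fix e :: real assume "e > 0"
  \<comment> \<open>\<open>m\<close> is only finitely additive, so the exchange is made on a finite set carrying all but
    \<open>e\<close> of the mass of \<open>p\<close>.\<close>
  obtain S where S: "finite S" "measure_pmf.prob p (- S) \<le> e"
    using pmf_finite_approx[OF \<open>e > 0\<close>] by blast
  have "0 \<le> B" using h abs_ge_zero order_trans by blast
  have bdd_h: "bdd_on G (h x)" for x by (rule bdd_onI[OF h])
  have abs_mean_h: "\<bar>m (h x)\<bar> \<le> B" for x
    using abs_mean_diff_le[OF bdd_h, of "\<lambda>_. 0" x B] h mean_const[of 0]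
    by (simp add: bdd_onI[where B=0])
  define T where "T y = (\<Sum>x\<in>S. pmf p x * h x y)" for y
  have "\<bar>m (\<lambda>y. \<integral>x. h x y \<partial>p) - m T\<bar> \<le> B * e"
  proof (rule abs_mean_diff_le)
    show "bdd_on G (\<lambda>y. \<integral>x. h x y \<partial>p)" by (rule bdd_on_integral_pmf[OF h])
    show "bdd_on G T" unfolding T_def by (intro bdd_on_sum bdd_on_mult bdd_h)
    show "\<bar>(\<integral>x. h x y \<partial>p) - T y\<bar> \<le> B * e" for y
      using abs_integral_pmf_minus_sum_le[OF S(1) h] mult_left_mono[OF S(2) \<open>0 \<le> B\<close>]
      unfolding T_def by (meson order_trans)
  qed
  moreover have "m T = (\<Sum>x\<in>S. pmf p x * m (h x))"
    unfolding T_def by (simp add: mean_sum mean_mult bdd_on_mult bdd_h)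
  moreover have "\<bar>(\<integral>x. m (h x) \<partial>p) - (\<Sum>x\<in>S. pmf p x * m (h x))\<bar> \<le> B * e"
    using abs_integral_pmf_minus_sum_le[OF S(1) abs_mean_h] mult_left_mono[OF S(2) \<open>0 \<le> B\<close>]
    by (meson order_trans)
  ultimately show "\<bar>m (\<lambda>y. \<integral>x. h x y \<partial>p) - (\<integral>x. m (h x) \<partial>p)\<bar> \<le> (2 * B) * e"
    by linarith
qed

lemma mean_indicator_centralizer:
  "group G \<Longrightarrow> x \<in> carrier G \<Longrightarrow> m (indicator (centralizer G x)) = inv_centralizer_index G x"
  unfolding inv_centralizer_index_def
  by (intro mean_indicator_subgroup group.subgroup_centralizer)

lemma dc_mean_eq_mean_inv_centralizer_index:
  assumes "group G"
  shows "dc_mean G m = m (inv_centralizer_index G)"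
proof -
  have inner: "m (\<lambda>x. if x \<otimes> y = y \<otimes> x then 1 else 0) = inv_centralizer_index G y"
    if "y \<in> carrier G" for y
  proof -
    have "m (\<lambda>x. if x \<otimes> y = y \<otimes> x then 1 else 0) = m (indicator (centralizer G y))"
      by (intro mean_cong bdd_on_indicator bdd_onI[where B=1])
        (auto simp: centralizer_def indicator_def)
    then show ?thesis using mean_indicator_centralizer[OF assms that] by simp
  qed
  have "bdd_on G (\<lambda>y. m (\<lambda>x. if x \<otimes> y = y \<otimes> x then 1 else 0))"
    by (rule bdd_onI[where B=1]) (simp add: inner abs_inv_centralizer_index_le_1)
  then show ?thesis
    unfolding dc_mean_def
    by (rule mean_cong[OF _ bdd_on_inv_centralizer_index]) (rule inner)
qed

lemma mean_measure_centralizer: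
  assumes "group G" and p: "prob_on G p"
  shows "m (\<lambda>y. measure_pmf.prob p (centralizer G y)) = (\<integral>x. inv_centralizer_index G x \<partial>p)"
proof -
  have ind: "\<bar>indicator (centralizer G x) y :: real\<bar> \<le> 1" for x y
    by (simp add: indicator_def)
  have prob_eq: "measure_pmf.prob p (centralizer G y) = (\<integral>x. indicator (centralizer G x) y \<partial>p)"
    if "y \<in> carrier G" for y
  proof -
    have "AE x in p. indicator (centralizer G y) x = (indicator (centralizer G x) y :: real)"
      using p that by (intro AE_pmfI) (auto simp: prob_on_def centralizer_def indicator_def)
    then show ?thesis by (simp add: integral_cong_AE[symmetric])
  qed
  have "m (\<lambda>y. measure_pmf.prob p (centralizer G y))
      = m (\<lambda>y. \<integral>x. indicator (centralizer G x) y \<partial>p)"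
  proof (rule mean_cong[OF _ bdd_on_integral_pmf[OF ind]])
    show "bdd_on G (\<lambda>y. measure_pmf.prob p (centralizer G y))"
      by (rule bdd_onI[where B=1]) simp
  qed (rule prob_eq)
  also have "\<dots> = (\<integral>x. m (indicator (centralizer G x)) \<partial>p)"
    by (rule mean_integral_pmf[OF ind])
  also have "\<dots> = (\<integral>x. inv_centralizer_index G x \<partial>p)"
    using p mean_indicator_centralizer[OF assms(1)]
    by (intro integral_cong_AE AE_pmfI) (auto simp: prob_on_def)
  finally show ?thesis .
qed

lemma comm_prob_tendsto_mean:
  assumes "group G" and "\<forall>n. prob_on G (M n)" and "measures_index_uniformly G M"
  shows "(\<lambda>n. comm_prob G (M n)) \<longlonglongrightarrow> m (inv_centralizer_index G)"
proof (rule tendstoI)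
  fix r :: real assume "r > 0"
  then have "eventually (\<lambda>n. \<forall>x\<in>carrier G.
     \<bar>measure_pmf.prob (M n) (centralizer G x) - inv_centralizer_index G x\<bar> < r / 3) sequentially"
    using assms by (intro measures_index_uniformly_centralizer) auto
  then show "eventually (\<lambda>n. dist (comm_prob G (M n)) (m (inv_centralizer_index G)) < r) sequentially"
  proof (rule eventually_mono)
    fix n
    let ?g = "\<lambda>y. measure_pmf.prob (M n) (centralizer G y)"
    assume close: "\<forall>x\<in>carrier G. \<bar>?g x - inv_centralizer_index G x\<bar> < r / 3"
    have "\<bar>comm_prob G (M n) - (\<integral>x. inv_centralizer_index G x \<partial>M n)\<bar> \<le> r / 3"
      unfolding comm_prob_eq_comm_prob_pair using assms(2) close
      by (intro comm_prob_pair_approx) (auto simp: abs_inv_centralizer_index_le_1 less_imp_le)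
    moreover have "(\<integral>x. inv_centralizer_index G x \<partial>M n) = m ?g"
      using mean_measure_centralizer assms(1,2) by simp
    moreover have "\<bar>m ?g - m (inv_centralizer_index G)\<bar> \<le> r / 3"
      using close
      by (intro abs_mean_diff_le bdd_on_inv_centralizer_index bdd_onI[where B=1]) auto
    ultimately show "dist (comm_prob G (M n)) (m (inv_centralizer_index G)) < r"
      using \<open>r > 0\<close> unfolding dist_real_def abs_le_iff abs_less_iff by linarith
  qed
qed

end

theorem theorem1p19:
  fixes G :: "('a, 'b) monoid_scheme" and M :: "nat \<Rightarrow> 'a pmf"
  assumes "group G" and "fin_gen G"
    and "\<forall>n. prob_on G (M n)"
    and "measures_index_uniformly G M"
  shows "((\<lambda>n. ereal (comm_prob G (M n))) \<longlonglongrightarrow> dc_seq G M)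
    \<and> (\<forall>M'. (\<forall>n. prob_on G (M' n)) \<longrightarrow> measures_index_uniformly G M'
               \<longrightarrow> dc_seq G M' = dc_seq G M)
    \<and> (amenable G \<longrightarrow> (\<forall>m. left_inv_mean G m \<longrightarrow> ereal (dc_mean G m) = dc_seq G M))"
proof -
  have conv: "convergent (\<lambda>n. comm_prob G (M n))"
    by (rule comm_prob_convergent[OF assms(1,3,4)])
  have dc: "dc_seq G M = ereal (lim (\<lambda>n. comm_prob G (M n)))"
    by (rule dc_seq_eq_lim[OF conv])
  have "(\<lambda>n. ereal (comm_prob G (M n))) \<longlonglongrightarrow> dc_seq G M"
    using conv by (simp add: dc convergent_LIMSEQ_iff)
  moreover have "dc_seq G M' = dc_seq G M"
    if "\<forall>n. prob_on G (M' n)" and "measures_index_uniformly G M'" for M'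
    using dc dc_seq_eq_lim[OF comm_prob_convergent[OF assms(1) that]]
      lim_comm_prob_unique[OF assms(1,3) that(1) assms(4) that(2)]
    by simp
  moreover have "ereal (dc_mean G m) = dc_seq G M" if "left_inv_mean G m" for m
  proof -
    have "(\<lambda>n. comm_prob G (M n)) \<longlonglongrightarrow> dc_mean G m"
      using comm_prob_tendsto_mean[OF that assms(1,3,4)]
        dc_mean_eq_mean_inv_centralizer_index[OF that assms(1)]
      by simp
    then show ?thesis by (simp add: dc limI)
  qed
  ultimately show ?thesis by blast
qed

end
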